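(* Let $M,N\in\mathbb{N}$ and let $E$ be the Motzkin code of $\mathbf{M}(M,N)$. Its generating function $f(E,z)=\sum_{u\in E}z^{|u|}$ (a formal power series) satisfies $$f(E,z)^2+(Nz-1)f(E,z)+Mz^2=0,$$ and hence $f(E,z)=\frac12\left\{1-Nz-\sqrt{(1-Nz)^2-4Mz^2}\right\}$.
   Context: Alphabet $\Sigma=\{\lambda_1,\dots,\lambda_M,\rho_1,\dots,\rho_M,1_1,\dots,1_N\}$. $\mathcal{M}(M,N)$ is the monoid with zero generated by $\Sigma$ and an identity $\mathbf{1}$, subject only to the relations $\lambda_i\rho_i=\mathbf{1}$, $\lambda_i\rho_j=0$ ($i\neq j$), each $1_i$ acts as the identity ($1_i\alpha=\alpha 1_i=\alpha$, $1_i1_j=\mathbf 1$), and $0$ is absorbing; no other relations. $\mathit{red}:\Sigma^*\to\mathcal{M}(M,N)$ sends a word to the product of its letters (empty word to $\mathbf 1$). The Motzkin shift is $\mathbf{M}(M,N)=\{x\in\Sigma^{\mathbb Z}:\mathit{red}(x_i\cdots x_j)\neq 0\ \forall i\le j\}$, and $\mathcal B_n(\mathbf M(M,N))$ denotes its set of blocks of length $n$. The Motzkin code is $E=\bigcup_{n\ge1}E_n$ with $E_n=\{w\in\mathcal B_n(\mathbf M(M,N)): w=\lambda_i v\rho_i \text{ for some } 1\le i\le M \text{ and some word } v \text{ with } \mathit{red}(v)=\mathbf 1\}$; $|u|$ denotes the length of $u$. *)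

theory Defs
  imports "HOL-Computational_Algebra.Formal_Power_Series"
begin

(* Letters: Lam i = lambda_i, Rho i = rho_i, One i = 1_i (indices start at 1). *)
datatype letter = Lam nat | Rho nat | One nat

definition alphabet :: "nat \<Rightarrow> nat \<Rightarrow> letter set" where
  "alphabet M N = {Lam i | i. 1 \<le> i \<and> i \<le> M} \<union> {Rho i | i. 1 \<le> i \<and> i \<le> M}
                  \<union> {One i | i. 1 \<le> i \<and> i \<le> N}"

(* Concrete model of the monoid M(M,N): every nonzero element is uniquely
   rho_{j1}...rho_{jk} lambda_{i1}...lambda_{il}; it is represented as
   Some (rs, ls) with rs = [j1,...,jk] and ls = [il,...,i1] (stack, top first).
   None represents 0; Some ([],[]) represents the identity. *)
type_synonym melem = "(nat list \<times> nat list) option"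

fun mstep :: "melem \<Rightarrow> letter \<Rightarrow> melem" where
  "mstep None _ = None"
| "mstep (Some (rs, ls)) (One _) = Some (rs, ls)"
| "mstep (Some (rs, ls)) (Lam i) = Some (rs, i # ls)"
| "mstep (Some (rs, [])) (Rho j) = Some (rs @ [j], [])"
| "mstep (Some (rs, i # ls)) (Rho j) = (if i = j then Some (rs, ls) else None)"

definition red :: "letter list \<Rightarrow> melem" where
  "red w = foldl mstep (Some ([], [])) w"

abbreviation mzero :: melem where "mzero \<equiv> None"
abbreviation mone :: melem where "mone \<equiv> Some ([], [])"

definition motzkin_shift :: "nat \<Rightarrow> nat \<Rightarrow> (int \<Rightarrow> letter) set" where
  "motzkin_shift M N = {x. (\<forall>k. x k \<in> alphabet M N) \<and>
      (\<forall>i j. i \<le> j \<longrightarrow> red (map (\<lambda>t. x (i + int t)) [0..<nat (j - i) + 1]) \<noteq> mzero)}"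

definition blocks :: "nat \<Rightarrow> nat \<Rightarrow> nat \<Rightarrow> letter list set" where
  "blocks M N n = {w. \<exists>x \<in> motzkin_shift M N. \<exists>k. w = map (\<lambda>t. x (k + int t)) [0..<n]}"

definition motzkin_code_n :: "nat \<Rightarrow> nat \<Rightarrow> nat \<Rightarrow> letter list set" where
  "motzkin_code_n M N n = {w \<in> blocks M N n. \<exists>i v. 1 \<le> i \<and> i \<le> M \<and>
        w = Lam i # v @ [Rho i] \<and> red v = mone}"

definition motzkin_code :: "nat \<Rightarrow> nat \<Rightarrow> letter list set" where
  "motzkin_code M N = (\<Union>n\<in>{1..}. motzkin_code_n M N n)"

definition genfun :: "letter list set \<Rightarrow> real fps" where
  "genfun E = Abs_fps (\<lambda>n. real (card {u \<in> E. length u = n}))"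

end

theory Submission
  imports Defs
begin

(* A word of the code is lambda_i v rho_i with red v = 1, so f = M z^2 g where g counts
   the balanced words (those reducing to 1).  Splitting a balanced word after its first
   letter 1_k, or after the first rho_i matching an initial lambda_i, gives
   g = 1 + N z g + M z^2 g^2, and eliminating g yields the quadratic for f.  As f has
   constant term 0, 1 - N z - 2 f is the square root of the discriminant with constant
   term 1, i.e. the principal one.  On the side of the shift one only needs that every
   balanced word over the alphabet is a block: padded by lambda_1 rho_1 lambda_1 rho_1 ...
   on both sides, each finite window of it is a factor of a balanced word, hence nonzero. *)

lemma foldl_mstep_None [simp]: "foldl mstep None u = None"
  by (induction u) auto

lemma red_Nil [simp]: "red [] = mone"
  by (simp add: red_def)

lemma red_append: "red (u @ v) = foldl mstep (red u) v"
  by (simp add: red_def)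

lemma length_rhos_mstep_mono:
  "mstep (Some (rs, ls)) a = Some (rs', ls') \<Longrightarrow> length rs \<le> length rs'"
  by (cases "(Some (rs, ls), a)" rule: mstep.cases) (auto split: if_splits)

lemma length_rhos_foldl_mstep_mono:
  "foldl mstep (Some (rs, ls)) u = Some (rs', ls') \<Longrightarrow> length rs \<le> length rs'"
proof (induction u arbitrary: rs ls)
  case (Cons a u)
  then obtain rs'' ls'' where step: "mstep (Some (rs, ls)) a = Some (rs'', ls'')"
    by (cases "mstep (Some (rs, ls)) a") auto
  with Cons show ?case using length_rhos_mstep_mono[OF step] by fastforce
qed simp

lemma red_balanced_Rho_not_mone: "red w = mone \<Longrightarrow> red (w @ Rho i # u) \<noteq> mone"
  using length_rhos_foldl_mstep_mono[of "[i]" "[]" u "[]" "[]"] by (auto simp: red_append)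

(* A run that ends with its initial rho-part never pops below its initial stack T0. *)
lemma foldl_mstep_stack_suffix:
  "foldl mstep (Some (rs0, T0)) v = Some (rs0, T) \<Longrightarrow>
   foldl mstep (Some (rs, T0 @ ls)) v = Some (rs, T @ ls)"
proof (induction v arbitrary: T0 rs0 rs)
  case (Cons a v)
  show ?case
  proof (cases a)
    case (Rho j)
    show ?thesis
    proof (cases T0)
      case Nil
      then have "foldl mstep (Some (rs0 @ [j], [])) v = Some (rs0, T)"
        using Cons.prems Rho by simp
      from length_rhos_foldl_mstep_mono[OF this] show ?thesis by simp
    next
      case (Cons t T')
      then show ?thesis using Cons.IH[of rs0 T'] Cons.prems Rho by (cases "t = j") auto
    qed
  qed (use Cons.IH[of rs0 "_ # T0"] Cons.IH[of rs0 T0] Cons.prems in auto)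
qed simp

lemma balanced_foldl_mstep: "red v = mone \<Longrightarrow> foldl mstep s v = s"
  using foldl_mstep_stack_suffix[of "[]" "[]" v "[]"] by (cases s) (auto simp: red_def)

(* Stack entries below T can only cause mismatches: without them a rho is merely recorded. *)
lemma foldl_mstep_nonzero_stack_prefix:
  "foldl mstep (Some (rs, T @ ls)) u \<noteq> None \<Longrightarrow> foldl mstep (Some (R, T)) u \<noteq> None"
proof (induction u arbitrary: rs R T ls)
  case (Cons a u)
  show ?case
  proof (cases a)
    case (Rho j)
    show ?thesis
    proof (cases T)
      case Nil
      then show ?thesis
        using Cons.IH[of "rs @ [j]" "[]" "[]" "R @ [j]"] Cons.IH[of rs "[]" "tl ls" "R @ [j]"]
          Cons.prems Rho
        by (cases ls) (auto split: if_splits)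
    next
      case (Cons t T')
      then show ?thesis using Cons.IH[of rs T' ls R] Cons.prems Rho by (cases "t = j") auto
    qed
  qed (use Cons.IH[of rs "_ # T" ls R] Cons.IH[of rs T ls R] Cons.prems in auto)
qed simp

lemma red_infix_nonzero: "red (p @ u @ s) \<noteq> mzero \<Longrightarrow> red u \<noteq> mzero"
proof -
  assume "red (p @ u @ s) \<noteq> mzero"
  then have nonzero: "foldl mstep (red p) u \<noteq> mzero"
    by (metis foldl_mstep_None foldl_append red_append)
  then obtain rs ls where "red p = Some (rs, ls)" by (cases "red p") auto
  with nonzero show ?thesis
    using foldl_mstep_nonzero_stack_prefix[of rs "[]" ls u "[]"] by (simp add: red_def)
qed

lemma foldl_mstep_first_return:
  "foldl mstep (Some ([], T @ [i])) u = mone \<Longrightarrow>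
   \<exists>v u'. u = v @ Rho i # u' \<and> foldl mstep (Some ([], T)) v = mone \<and> red u' = mone"
proof (induction u arbitrary: T)
  case (Cons a u)
  show ?case
  proof (cases a)
    case (Lam j)
    then obtain v u' where "u = v @ Rho i # u'" "foldl mstep (Some ([], j # T)) v = mone"
      "red u' = mone"
      using Cons.IH[of "j # T"] Cons.prems by auto
    then show ?thesis using Lam by (intro exI[of _ "Lam j # v"] exI[of _ u']) auto
  next
    case (One k)
    then obtain v u' where "u = v @ Rho i # u'" "foldl mstep (Some ([], T)) v = mone"
      "red u' = mone"
      using Cons.IH[of T] Cons.prems by auto
    then show ?thesis using One by (intro exI[of _ "One k # v"] exI[of _ u']) auto
  next
    case (Rho j)
    show ?thesis
    proof (cases T)
      case Nil
      then have "j = i" "red u = mone" using Cons.prems Rho by (auto simp: red_def split: if_splits)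
      then show ?thesis using Rho Nil by (intro exI[of _ "[]"] exI[of _ u]) auto
    next
      case (Cons t T')
      then have "t = j" using Cons.prems Rho by (cases "t = j") auto
      moreover obtain v u' where "u = v @ Rho i # u'" "foldl mstep (Some ([], T')) v = mone"
        "red u' = mone"
        using Cons.IH[of T'] Cons.prems Rho Cons by (auto split: if_splits)
      ultimately show ?thesis using Rho Cons by (intro exI[of _ "Rho j # v"] exI[of _ u']) auto
    qed
  qed
qed simp

lemma alphabet_eq: "alphabet M N = Lam ` {1..M} \<union> Rho ` {1..M} \<union> One ` {1..N}"
  unfolding alphabet_def by auto

lemma finite_alphabet: "finite (alphabet M N)"
  unfolding alphabet_eq by simp

lemma Lam_in_alphabet [simp]: "Lam i \<in> alphabet M N \<longleftrightarrow> i \<in> {1..M}"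
  and Rho_in_alphabet [simp]: "Rho i \<in> alphabet M N \<longleftrightarrow> i \<in> {1..M}"
  and One_in_alphabet [simp]: "One i \<in> alphabet M N \<longleftrightarrow> i \<in> {1..N}"
  by (auto simp: alphabet_eq)

definition balanced_words :: "nat \<Rightarrow> nat \<Rightarrow> nat \<Rightarrow> letter list set" where
  "balanced_words M N n = {v. set v \<subseteq> alphabet M N \<and> length v = n \<and> red v = mone}"

lemma finite_balanced_words: "finite (balanced_words M N n)"
proof (rule finite_subset)
  show "balanced_words M N n \<subseteq> {v. set v \<subseteq> alphabet M N \<and> length v = n}"
    unfolding balanced_words_def by blast
qed (rule finite_lists_length_eq[OF finite_alphabet])

lemma balanced_words_0: "balanced_words M N 0 = {[]}"
  by (auto simp: balanced_words_def red_def)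

lemma One_Cons_balanced_words:
  "k \<in> {1..N} \<Longrightarrow> v \<in> balanced_words M N n \<Longrightarrow> One k # v \<in> balanced_words M N (Suc n)"
  by (auto simp: balanced_words_def red_def)

lemma red_Lam_balanced_Rho:
  "red v = mone \<Longrightarrow> red (Lam i # v @ Rho i # v') = red v'"
  using balanced_foldl_mstep[of v "Some ([], [i])"] by (simp add: red_def)

lemma Lam_Rho_balanced_words:
  "i \<in> {1..M} \<Longrightarrow> v \<in> balanced_words M N m \<Longrightarrow> v' \<in> balanced_words M N m' \<Longrightarrow>
   Lam i # v @ Rho i # v' \<in> balanced_words M N (Suc (Suc (m + m')))"
  by (auto simp: balanced_words_def red_Lam_balanced_Rho)

lemma balanced_words_SucE:
  assumes "w \<in> balanced_words M N (Suc n)"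
  obtains (One) k v where "k \<in> {1..N}" "v \<in> balanced_words M N n" "w = One k # v"
  | (Lam) m i v v' where "m < n" "i \<in> {1..M}" "v \<in> balanced_words M N m"
      "v' \<in> balanced_words M N (n - 1 - m)" "w = Lam i # v @ Rho i # v'"
proof -
  obtain a u where w: "w = a # u" using assms by (cases w) (auto simp: balanced_words_def)
  show thesis
  proof (cases a)
    case (One k)
    then show thesis using that(1)[of k u] assms w by (auto simp: balanced_words_def red_def)
  next
    case (Rho j)
    then show thesis using assms w red_balanced_Rho_not_mone[of "[]" j u]
      by (auto simp: balanced_words_def)
  next
    case (Lam i)
    then have "foldl mstep (Some ([], [] @ [i])) u = mone"
      using assms w by (simp add: balanced_words_def red_def)
    from foldl_mstep_first_return[OF this] obtain v v' where
      u: "u = v @ Rho i # v'" "red v = mone" "red v' = mone" by (auto simp: red_def)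
    show thesis
      by (rule that(2)[of "length v" i v v'])
        (use assms w u Lam in \<open>auto simp: balanced_words_def\<close>)
  qed
qed

lemma balanced_words_Suc: "balanced_words M N (Suc n) =
   (\<lambda>(k, v). One k # v) ` ({1..N} \<times> balanced_words M N n) \<union>
   (\<Union>m<n. (\<lambda>(i, v, v'). Lam i # v @ Rho i # v') `
       ({1..M} \<times> balanced_words M N m \<times> balanced_words M N (n - 1 - m)))"
  (is "_ = ?One \<union> ?Lam")
proof (intro equalityI subsetI)
  fix w assume "w \<in> balanced_words M N (Suc n)"
  then show "w \<in> ?One \<union> ?Lam"
    by (cases rule: balanced_words_SucE) force+
next
  fix w assume "w \<in> ?One \<union> ?Lam"
  then show "w \<in> balanced_words M N (Suc n)"
  proof (elim UnE UN_E imageE)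
    fix m x
    assume "m \<in> {..<n}"
      and "x \<in> {1..M} \<times> balanced_words M N m \<times> balanced_words M N (n - 1 - m)"
      and "w = (\<lambda>(i, v, v'). Lam i # v @ Rho i # v') x"
    moreover have "Suc (Suc (m + (n - 1 - m))) = Suc n" using \<open>m \<in> {..<n}\<close> by simp
    ultimately show ?thesis
      using Lam_Rho_balanced_words[where m = m and m' = "n - 1 - m"] by auto
  qed (auto intro: One_Cons_balanced_words)
qed

lemma Lam_Rho_decomposition_unique:
  assumes "Lam i # v @ Rho i # v' = Lam j # w @ Rho j # w'" "red v = mone" "red w = mone"
  shows "v = w"
proof -
  have "v @ Rho i # v' = w @ Rho i # w'" using assms(1) by auto
  then obtain us where
    "v = w @ us \<and> us @ Rho i # v' = Rho i # w' \<or> v @ us = w \<and> Rho i # v' = us @ Rho i # w'"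
    by (auto simp: append_eq_append_conv2)
  then show ?thesis
    using assms(2,3) red_balanced_Rho_not_mone[of w i] red_balanced_Rho_not_mone[of v i]
    by (cases us) auto
qed

lemma card_balanced_words_Suc: "card (balanced_words M N (Suc n)) =
   N * card (balanced_words M N n) +
   M * (\<Sum>m<n. card (balanced_words M N m) * card (balanced_words M N (n - 1 - m)))"
proof -
  let ?D = "balanced_words M N"
  let ?One = "(\<lambda>(k, v). One k # v) ` ({1..N} \<times> ?D n)"
  let ?Lam = "\<lambda>m. (\<lambda>(i, v, v'). Lam i # v @ Rho i # v') ` ({1..M} \<times> ?D m \<times> ?D (n - 1 - m))"
  have card_One: "card ?One = N * card (?D n)"
    by (subst card_image) (auto simp: inj_on_def card_cartesian_product)
  have card_Lam: "card (?Lam m) = M * (card (?D m) * card (?D (n - 1 - m)))" for m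
    by (subst card_image) (auto simp: inj_on_def balanced_words_def card_cartesian_product)
  have disjoint_Lam: "?Lam m \<inter> ?Lam m' = {}" if "m \<noteq> m'" for m m'
    using that Lam_Rho_decomposition_unique by (fastforce simp: balanced_words_def)
  have "card (?D (Suc n)) = card ?One + card (\<Union>m<n. ?Lam m)"
    unfolding balanced_words_Suc by (rule card_Un_disjoint) (auto simp: finite_balanced_words)
  also have "card (\<Union>m<n. ?Lam m) = (\<Sum>m<n. card (?Lam m))"
    by (rule card_UN_disjoint) (use finite_balanced_words disjoint_Lam in auto)
  finally show ?thesis by (simp only: card_One card_Lam sum_distrib_left)
qed

definition window :: "(int \<Rightarrow> 'a) \<Rightarrow> int \<Rightarrow> nat \<Rightarrow> 'a list" where
  "window x i n = map (\<lambda>t. x (i + int t)) [0..<n]"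

lemma window_append: "window x i (m + n) = window x i m @ window x (i + int m) n"
  by (rule nth_equalityI) (auto simp: window_def nth_append add.assoc)

lemma window_infix:
  assumes "i' \<le> i" "i + int n \<le> i' + int n'"
  shows "\<exists>p s. window x i' n' = p @ window x i n @ s"
proof -
  define d where "d = nat (i - i')"
  have "n' = d + (n + (n' - d - n))" and "i' + int d = i" using assms by (auto simp: d_def)
  then have "window x i' n' = window x i' d @ window x i n @ window x (i + int n) (n' - d - n)"
    by (metis window_append)
  then show ?thesis by blast
qed

definition alternating :: "int \<Rightarrow> letter" where
  "alternating k = (if even k then Lam 1 else Rho 1)"

definition padded :: "letter list \<Rightarrow> int \<Rightarrow> letter" where
  "padded w k = (if k < 0 then alternating k
     else if k < int (length w) then w ! nat k else alternating (k - int (length w)))"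

definition lam_rho_power :: "nat \<Rightarrow> letter list" where
  "lam_rho_power a = concat (replicate a [Lam 1, Rho 1])"

lemma red_lam_rho_power: "red (lam_rho_power a) = mone"
  by (induction a) (simp_all add: lam_rho_power_def red_def)

lemma window_alternating:
  assumes "\<And>t. t < 2 * a \<Longrightarrow> x (k + int t) = alternating (int t)"
  shows "window x k (2 * a) = lam_rho_power a"
  using assms
proof (induction a arbitrary: k)
  case (Suc a)
  have "window x k (2 + 2 * a) = window x k 2 @ window x (k + 2) (2 * a)"
    by (simp only: window_append) simp
  also have "window x k 2 = [Lam 1, Rho 1]"
    using Suc.prems[of 0] Suc.prems[of 1]
    by (simp add: window_def numeral_2_eq_2 alternating_def)
  also have "window x (k + 2) (2 * a) = lam_rho_power a"
    by (rule Suc.IH) (use Suc.prems[of "_ + 2"] in \<open>auto simp: add.assoc alternating_def\<close>)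
  finally show ?case by (simp add: lam_rho_power_def)
qed (simp add: window_def lam_rho_power_def)

lemma window_padded_self: "window (padded w) 0 (length w) = w"
  by (rule nth_equalityI) (auto simp: window_def padded_def)

lemma window_padded:
  "window (padded w) (- 2 * int a) (2 * a + length w + 2 * b) =
   lam_rho_power a @ w @ lam_rho_power b"
proof -
  have "window (padded w) (- 2 * int a) (2 * a) = lam_rho_power a"
    by (rule window_alternating) (auto simp: padded_def alternating_def)
  moreover have "window (padded w) (int (length w)) (2 * b) = lam_rho_power b"
    by (rule window_alternating) (auto simp: padded_def alternating_def)
  ultimately show ?thesis by (simp add: window_append window_padded_self)
qed

lemma padded_in_alphabet:
  assumes "set w \<subseteq> alphabet M N" "1 \<le> M"
  shows "padded w k \<in> alphabet M N"
proof -
  have "w ! nat k \<in> alphabet M N" if "0 \<le> k" "k < int (length w)"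
    using assms(1) that by (metis nat_less_iff nth_mem subsetD)
  then show ?thesis using assms(2) by (auto simp: padded_def alternating_def)
qed

lemma padded_in_motzkin_shift:
  assumes "red w = mone" "set w \<subseteq> alphabet M N" "1 \<le> M"
  shows "padded w \<in> motzkin_shift M N"
  unfolding motzkin_shift_def
proof (intro CollectI conjI allI impI)
  fix k show "padded w k \<in> alphabet M N" using padded_in_alphabet assms(2,3) .
next
  fix i j :: int assume "i \<le> j"
  define a where "a = nat (- i)"
  define b where "b = nat (j + 1)"
  have "\<exists>p s. window (padded w) (- 2 * int a) (2 * a + length w + 2 * b) =
      p @ window (padded w) i (nat (j - i) + 1) @ s"
    by (rule window_infix) (use \<open>i \<le> j\<close> in \<open>auto simp: a_def b_def\<close>)
  moreover have "red (lam_rho_power a @ w @ lam_rho_power b) = mone"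
    using assms(1) by (simp add: red_append red_lam_rho_power balanced_foldl_mstep)
  ultimately have "red (window (padded w) i (nat (j - i) + 1)) \<noteq> mzero"
    using red_infix_nonzero by (metis window_padded option.distinct(1))
  then show "red (map (\<lambda>t. padded w (i + int t)) [0..<nat (j - i) + 1]) \<noteq> mzero"
    by (simp add: window_def)
qed

lemma balanced_in_blocks:
  assumes "red w = mone" "set w \<subseteq> alphabet M N" "1 \<le> M"
  shows "w \<in> blocks M N (length w)"
proof -
  have "w = map (\<lambda>t. padded w (0 + int t)) [0..<length w]"
    using window_padded_self[of w] by (simp add: window_def)
  then show ?thesis using padded_in_motzkin_shift[OF assms] unfolding blocks_def by blast
qed

lemma blocks_length_alphabet:
  "w \<in> blocks M N n \<Longrightarrow> length w = n \<and> set w \<subseteq> alphabet M N"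
  unfolding blocks_def motzkin_shift_def by auto

lemma motzkin_code_length: "{u \<in> motzkin_code M N. length u = n} = motzkin_code_n M N n"
  unfolding motzkin_code_def motzkin_code_n_def using blocks_length_alphabet by fastforce

lemma motzkin_code_n_short: "n < 2 \<Longrightarrow> motzkin_code_n M N n = {}"
  unfolding motzkin_code_n_def using blocks_length_alphabet by fastforce

lemma motzkin_code_n_Suc_Suc: "motzkin_code_n M N (Suc (Suc n)) =
   (\<lambda>(i, v). Lam i # v @ [Rho i]) ` ({1..M} \<times> balanced_words M N n)"
proof (intro equalityI subsetI)
  fix w assume "w \<in> motzkin_code_n M N (Suc (Suc n))"
  then obtain i v where w: "w \<in> blocks M N (Suc (Suc n))" "i \<in> {1..M}"
    "w = Lam i # v @ [Rho i]" "red v = mone" unfolding motzkin_code_n_def by auto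
  then have "v \<in> balanced_words M N n"
    using blocks_length_alphabet[OF w(1)] by (auto simp: balanced_words_def)
  then show "w \<in> (\<lambda>(i, v). Lam i # v @ [Rho i]) ` ({1..M} \<times> balanced_words M N n)"
    using w by force
next
  fix w assume "w \<in> (\<lambda>(i, v). Lam i # v @ [Rho i]) ` ({1..M} \<times> balanced_words M N n)"
  then obtain i v where iv: "i \<in> {1..M}" "v \<in> balanced_words M N n" "w = Lam i # v @ [Rho i]"
    by auto
  then have "red w = mone" "set w \<subseteq> alphabet M N" "length w = Suc (Suc n)"
    using red_Lam_balanced_Rho[of v i "[]"] by (auto simp: balanced_words_def)
  then show "w \<in> motzkin_code_n M N (Suc (Suc n))"
    using balanced_in_blocks[of w M N] iv unfolding motzkin_code_n_def
    by (auto simp: balanced_words_def)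
qed

lemma card_motzkin_code_n_Suc_Suc:
  "card (motzkin_code_n M N (Suc (Suc n))) = M * card (balanced_words M N n)"
  unfolding motzkin_code_n_Suc_Suc
  by (subst card_image) (auto simp: inj_on_def card_cartesian_product)

unbundle fps_syntax

definition balanced_fps :: "nat \<Rightarrow> nat \<Rightarrow> real fps" where
  "balanced_fps M N = Abs_fps (\<lambda>n. real (card (balanced_words M N n)))"

lemma balanced_fps_equation:
  fixes M N :: nat defines "g \<equiv> balanced_fps M N"
  shows "g = 1 + of_nat N * fps_X * g + of_nat M * fps_X ^ 2 * g ^ 2"
proof (rule fps_ext)
  fix n
  have convolution: "(\<Sum>m<k. g $ m * g $ (k - 1 - m)) = (if k = 0 then 0 else (g ^ 2) $ (k - 1))"
    for k by (cases k) (simp_all add: power2_eq_square fps_mult_nth atLeast0AtMost lessThan_Suc_atMost)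
  show "g $ n = (1 + of_nat N * fps_X * g + of_nat M * fps_X ^ 2 * g ^ 2) $ n"
  proof (cases n)
    case 0
    then show ?thesis by (simp add: g_def balanced_fps_def balanced_words_0)
  next
    case (Suc k)
    have "g $ Suc k = real N * g $ k + real M * (\<Sum>m<k. g $ m * g $ (k - 1 - m))"
      by (simp add: g_def balanced_fps_def card_balanced_words_Suc)
    also have "\<dots> = real N * g $ k + real M * (if k = 0 then 0 else (g ^ 2) $ (k - 1))"
      by (simp only: convolution)
    finally show ?thesis
      by (simp add: Suc mult.assoc fps_X_power_mult_nth flip: fps_of_nat)
  qed
qed

lemma genfun_motzkin_code: "genfun (motzkin_code M N) = of_nat M * fps_X ^ 2 * balanced_fps M N"
proof (rule fps_ext)
  fix n
  show "genfun (motzkin_code M N) $ n = (of_nat M * fps_X ^ 2 * balanced_fps M N) $ n"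
  proof (cases "n < 2")
    case True
    then show ?thesis
      by (simp add: genfun_def motzkin_code_length motzkin_code_n_short mult.assoc
          fps_X_power_mult_nth flip: fps_of_nat)
  next
    case False
    then obtain k where "n = Suc (Suc k)" by (metis add_2_eq_Suc le_Suc_ex not_less)
    then show ?thesis
      by (simp add: genfun_def motzkin_code_length card_motzkin_code_n_Suc_Suc balanced_fps_def
          mult.assoc fps_X_power_mult_nth flip: fps_of_nat)
  qed
qed

lemma fps_quadratic_solution:
  fixes f p q :: "real fps"
  assumes "f ^ 2 - p * f + q = 0" "f $ 0 = 0" "p $ 0 = 1"
  shows "f = fps_const (1/2) * (p - fps_radical (\<lambda>k x. root k x) 2 (p ^ 2 - 4 * q))"
proof -
  define h where "h = p - 2 * f"
  define D where "D = p ^ 2 - 4 * q"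
  have "h ^ 2 = D + 4 * (f ^ 2 - p * f + q)"
    by (simp add: h_def D_def algebra_simps power2_eq_square)
  then have h_squared: "h ^ Suc 1 = D" unfolding assms(1) by (simp add: numeral_2_eq_2)
  have h0: "h $ 0 = 1" using assms(2,3) by (simp add: h_def)
  have "D $ 0 = 1" by (simp flip: h_squared add: h0)
  with h_squared h0 have "h = fps_radical (\<lambda>k x. root k x) (Suc 1) D"
    by (subst (asm) radical_unique) auto
  moreover have "f = fps_const (1/2) * (p - h)"
    by (simp add: h_def numeral_fps_const fps_const_mult flip: mult.assoc)
  ultimately show ?thesis by (simp add: D_def numeral_2_eq_2)
qed

theorem theorem2p1:
  fixes M N :: nat
  defines "f \<equiv> genfun (motzkin_code M N)"
  shows "f ^ 2 + (of_nat N * fps_X - 1) * f + of_nat M * fps_X ^ 2 = 0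
     \<and> f = fps_const (1/2) * (1 - of_nat N * fps_X
            - fps_radical (\<lambda>k x. root k x) 2 ((1 - of_nat N * fps_X) ^ 2 - 4 * of_nat M * fps_X ^ 2))"
proof -
  define g where "g = balanced_fps M N"
  have f_eq: "f = of_nat M * fps_X ^ 2 * g"
    unfolding f_def g_def by (rule genfun_motzkin_code)
  have "f ^ 2 + (of_nat N * fps_X - 1) * f + of_nat M * fps_X ^ 2 =
        of_nat M * fps_X ^ 2 * (1 + of_nat N * fps_X * g + of_nat M * fps_X ^ 2 * g ^ 2 - g)"
    by (simp add: f_eq algebra_simps power2_eq_square)
  also have "\<dots> = 0"
    using balanced_fps_equation[of M N] by (simp flip: g_def)
  finally have quadratic: "f ^ 2 + (of_nat N * fps_X - 1) * f + of_nat M * fps_X ^ 2 = 0" .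
  have "f ^ 2 - (1 - of_nat N * fps_X) * f + of_nat M * fps_X ^ 2 = 0"
    using quadratic by (simp add: algebra_simps)
  moreover have "f $ 0 = 0" by (simp add: f_eq mult.assoc fps_X_power_mult_nth)
  ultimately have "f = fps_const (1/2) * (1 - of_nat N * fps_X
      - fps_radical (\<lambda>k x. root k x) 2 ((1 - of_nat N * fps_X) ^ 2 - 4 * (of_nat M * fps_X ^ 2)))"
    by (rule fps_quadratic_solution) simp
  with quadratic show ?thesis by (simp add: mult.assoc)
qed

end
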